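(* Let $L=\mathcal{L}\,dt$ be a Lagrangian on $J^1Q$ and let $H=p_i\,dq^i-\mathcal{H}\,dt$ be a Hamiltonian form on $V^*Q$ weakly associated with $L$. Then at every point of the Lagrangian constraint space $N_L$ the forms $H$ and $\widehat H^*H_L$ coincide: $H|_{N_L}=\widehat H^*H_L|_{N_L}$.
   Context: Let $Q\to\mathbb{R}$ be a fibre bundle over the time axis with coordinates $(t,q^i)$; $J^1Q$ is its first jet manifold with coordinates $(t,q^i,q^i_t)$; $V^*Q$ is its vertical cotangent bundle with coordinates $(t,q^i,p_i)$, $\partial^i=\partial/\partial p_i$. A Lagrangian is $L=\mathcal{L}\,dt$ with $\mathcal{L}$ a function on $J^1Q$; put $\pi_i=\partial\mathcal{L}/\partial q^i_t$. The Legendre map $\widehat L:J^1Q\to V^*Q$ over $Q$ is $p_i\circ\widehat L=\pi_i$, and $N_L=\widehat L(J^1Q)$ is the Lagrangian constraint space. The Poincaré–Cartan form is $H_L=\mathcal{L}\,dt+\pi_i(dq^i-q^i_t\,dt)$. A Hamiltonian form is a 1-form on $V^*Q$ locally $H=p_i\,dq^i-\mathcal{H}\,dt$ (the pull-back of the Liouville form $p\,dt+p_i\,dq^i$ of $T^*Q$ by a section of $T^*Q\to V^*Q$); its Hamiltonian map is $\widehat H:V^*Q\to J^1Q$, $q^i_t\circ\widehat H=\partial^i\mathcal{H}$. $H$ is weakly associated with $L$ if $\widehat L\circ\widehat H\circ\widehat L=\widehat L$ and the equality $H=H_{\widehat H}+\widehat H^*L$ holds at points of $N_L$, where $H_{\widehat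 H}=p_i\,dq^i-p_i\partial^i\mathcal{H}\,dt$; in coordinates the latter reads $\mathcal{H}(z)=p_i\partial^i\mathcal{H}(z)-\mathcal{L}(t,q^i,\partial^j\mathcal{H}(z))$ for $z\in N_L$. *)

theory Defs
  imports "HOL-Analysis.Analysis"
begin

text \<open>A point of J^1Q is (t, q, q_t), a point of V^*Q is (t, q, p),
  with q, q_t, p in real^'n (n = CARD('n) = fibre dimension of Q over the time axis).
  Tangent vectors to these (open subsets of) Euclidean spaces are elements of the same type.
  A 1-form is a map  point => tangent vector => real  (linear in the tangent vector).\<close>

type_synonym 'n pt = "real \<times> (real ^ ('n::finite)) \<times> (real ^ 'n)"
type_synonym 'n form1 = "'n pt \<Rightarrow> 'n pt \<Rightarrow> real"

definition dt :: "('n::finite) pt \<Rightarrow> real" where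
  "dt w = fst w"

definition dq :: "'n::finite \<Rightarrow> 'n pt \<Rightarrow> real" where
  "dq i w = (fst (snd w)) $ i"

text \<open>Partial derivative with respect to the third (fibre) coordinate group:
  for a function on J^1Q this is d/dq^i_t, for a function on V^*Q it is d/dp_i.\<close>
definition partial3 :: "(('n::finite) pt \<Rightarrow> real) \<Rightarrow> 'n \<Rightarrow> 'n pt \<Rightarrow> real" where
  "partial3 f i x = frechet_derivative f (at x) (0, 0, axis i 1)"

definition momenta :: "(('n::finite) pt \<Rightarrow> real) \<Rightarrow> 'n pt \<Rightarrow> real ^ 'n" where
  "momenta \<L> y = (\<chi> i. partial3 \<L> i y)"

definition legendre_map :: "(('n::finite) pt \<Rightarrow> real) \<Rightarrow> 'n pt \<Rightarrow> 'n pt" where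
  "legendre_map \<L> y = (fst y, fst (snd y), momenta \<L> y)"

definition constraint_space :: "(('n::finite) pt \<Rightarrow> real) \<Rightarrow> 'n pt set" where
  "constraint_space \<L> = range (legendre_map \<L>)"

definition hamiltonian_map :: "(('n::finite) pt \<Rightarrow> real) \<Rightarrow> 'n pt \<Rightarrow> 'n pt" where
  "hamiltonian_map \<H> z = (fst z, fst (snd z), (\<chi> i. partial3 \<H> i z))"

definition pullback :: "(('n::finite) pt \<Rightarrow> 'n pt) \<Rightarrow> 'n form1 \<Rightarrow> 'n form1" where
  "pullback \<Phi> \<omega> z w = \<omega> (\<Phi> z) (frechet_derivative \<Phi> (at z) w)"

definition lagrangian_form :: "(('n::finite) pt \<Rightarrow> real) \<Rightarrow> 'n form1" where
  "lagrangian_form \<L> y w = \<L> y * dt w"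

definition poincare_cartan :: "(('n::finite) pt \<Rightarrow> real) \<Rightarrow> 'n form1" where
  "poincare_cartan \<L> y w =
     \<L> y * dt w + (\<Sum>i\<in>UNIV. momenta \<L> y $ i * (dq i w - (snd (snd y)) $ i * dt w))"

definition hamiltonian_form :: "(('n::finite) pt \<Rightarrow> real) \<Rightarrow> 'n form1" where
  "hamiltonian_form \<H> z w = (\<Sum>i\<in>UNIV. (snd (snd z)) $ i * dq i w) - \<H> z * dt w"

definition H_hat_form :: "(('n::finite) pt \<Rightarrow> real) \<Rightarrow> 'n form1" where
  "H_hat_form \<H> z w =
     (\<Sum>i\<in>UNIV. (snd (snd z)) $ i * dq i w) - (\<Sum>i\<in>UNIV. (snd (snd z)) $ i * partial3 \<H> i z) * dt w"

definition weakly_associated :: "(('n::finite) pt \<Rightarrow> real) \<Rightarrow> ('n pt \<Rightarrow> real) \<Rightarrow> bool" where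
  "weakly_associated \<H> \<L> \<longleftrightarrow>
     (legendre_map \<L> \<circ> hamiltonian_map \<H> \<circ> legendre_map \<L> = legendre_map \<L>) \<and>
     (\<forall>z\<in>constraint_space \<L>. \<forall>w.
        hamiltonian_form \<H> z w
          = H_hat_form \<H> z w + pullback (hamiltonian_map \<H>) (lagrangian_form \<L>) z w)"

end

theory Submission
  imports Defs
begin

(* The Hamiltonian map Hhat covers the identity of Q, so its pull-back fixes dt and every dq^i.
   On N_L the weak association gives Lhat (Hhat z) = z, i.e. the momenta pi_i at Hhat z are the
   coordinates p_i of z. Substituting both facts into Hhat^* H_L turns it into
   Hhat^* L + p_i dq^i - p_i d^i H dt = Hhat^* L + H_Hhat, which is H on N_L by weak association. *)

lemma differentiable_vec_lambda:
  fixes f :: "'n::finite \<Rightarrow> 'a::real_normed_vector \<Rightarrow> real"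
  assumes "\<And>i. f i differentiable (at z)"
  shows "(\<lambda>x. \<chi> i. f i x) differentiable (at z)"
proof -
  have "(\<lambda>x. (\<chi> i. f i x) \<bullet> b) differentiable (at z)" if "b \<in> Basis" for b :: "real ^ 'n"
  proof -
    obtain j where "b = axis j 1"
      using \<open>b \<in> Basis\<close> unfolding Basis_vec_def by auto
    then show ?thesis
      using assms[of j] by (simp add: inner_axis)
  qed
  then show ?thesis
    using differentiable_componentwise_within by blast
qed

lemma frechet_derivative_linear_invariant:
  assumes "bounded_linear P" and "P \<circ> \<Phi> = P" and "\<Phi> differentiable (at z)"
  shows "P (frechet_derivative \<Phi> (at z) w) = P w"
proof -
  have "(\<Phi> has_derivative frechet_derivative \<Phi> (at z)) (at z)"
    using assms(3) by (rule frechet_derivative_works[THEN iffD1])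
  then have "(P \<circ> \<Phi> has_derivative P \<circ> frechet_derivative \<Phi> (at z)) (at z)"
    using bounded_linear.has_derivative[OF assms(1)] by (simp add: o_def)
  moreover have "(P \<circ> \<Phi> has_derivative P) (at z)"
    using assms(1,2) by (simp add: bounded_linear_imp_has_derivative)
  ultimately have "P \<circ> frechet_derivative \<Phi> (at z) = P"
    by (rule has_derivative_unique)
  then show ?thesis
    by (metis comp_apply)
qed

lemma hamiltonian_map_differentiable:
  fixes \<H> :: "'n::finite pt \<Rightarrow> real"
  assumes "\<And>i. (\<lambda>z'. partial3 \<H> i z') differentiable (at z)"
  shows "hamiltonian_map \<H> differentiable (at z)"
proof -
  have "(\<lambda>x::'n pt. fst x) differentiable (at z)"
    and "(\<lambda>x::'n pt. fst (snd x)) differentiable (at z)"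
    by (simp_all add: bounded_linear_imp_differentiable bounded_linear_fst
        bounded_linear_compose[OF bounded_linear_fst bounded_linear_snd])
  moreover have "(\<lambda>x::'n pt. \<chi> i. partial3 \<H> i x) differentiable (at z)"
    using assms by (rule differentiable_vec_lambda)
  ultimately show ?thesis
    unfolding hamiltonian_map_def[abs_def] by (intro differentiable_Pair)
qed

lemma
  fixes \<H> :: "'n::finite pt \<Rightarrow> real"
  assumes "\<And>i. (\<lambda>z'. partial3 \<H> i z') differentiable (at z)"
  shows dt_hamiltonian_map_derivative: "dt (frechet_derivative (hamiltonian_map \<H>) (at z) w) = dt w"
    and dq_hamiltonian_map_derivative: "dq i (frechet_derivative (hamiltonian_map \<H>) (at z) w) = dq i w"
proof -
  have diff: "hamiltonian_map \<H> differentiable (at z)"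
    using assms by (rule hamiltonian_map_differentiable)
  have "bounded_linear (dt :: 'n pt \<Rightarrow> real)"
    unfolding dt_def[abs_def] by (rule bounded_linear_fst)
  moreover have "dt \<circ> hamiltonian_map \<H> = dt"
    by (auto simp: dt_def hamiltonian_map_def)
  ultimately show "dt (frechet_derivative (hamiltonian_map \<H>) (at z) w) = dt w"
    using diff by (rule frechet_derivative_linear_invariant)
  have "bounded_linear (dq i :: 'n pt \<Rightarrow> real)"
    unfolding dq_def[abs_def]
    by (intro bounded_linear_compose[OF bounded_linear_vec_nth]
        bounded_linear_compose[OF bounded_linear_fst bounded_linear_snd])
  moreover have "dq i \<circ> hamiltonian_map \<H> = dq i"
    by (auto simp: dq_def hamiltonian_map_def)
  ultimately show "dq i (frechet_derivative (hamiltonian_map \<H>) (at z) w) = dq i w"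
    using diff by (rule frechet_derivative_linear_invariant)
qed

lemma momenta_hamiltonian_map_on_constraint_space:
  assumes "legendre_map \<L> \<circ> hamiltonian_map \<H> \<circ> legendre_map \<L> = legendre_map \<L>"
    and "z \<in> constraint_space \<L>"
  shows "momenta \<L> (hamiltonian_map \<H> z) = snd (snd z)"
proof -
  obtain y where y: "z = legendre_map \<L> y"
    using assms(2) unfolding constraint_space_def by auto
  have "legendre_map \<L> (hamiltonian_map \<H> z) = z"
    using fun_cong[OF assms(1), of y] y by simp
  then show ?thesis
    by (metis legendre_map_def snd_conv)
qed

lemma pullback_poincare_cartan:
  fixes \<L> \<H> :: "'n::finite pt \<Rightarrow> real"
  assumes "\<And>i. (\<lambda>z'. partial3 \<H> i z') differentiable (at z)"
    and "momenta \<L> (hamiltonian_map \<H> z) = snd (snd z)"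
  shows "pullback (hamiltonian_map \<H>) (poincare_cartan \<L>) z w
       = H_hat_form \<H> z w + pullback (hamiltonian_map \<H>) (lagrangian_form \<L>) z w"
proof -
  let ?v = "frechet_derivative (hamiltonian_map \<H>) (at z) w"
  have "pullback (hamiltonian_map \<H>) (poincare_cartan \<L>) z w
      = \<L> (hamiltonian_map \<H> z) * dt w
        + (\<Sum>i\<in>UNIV. snd (snd z) $ i * (dq i w - partial3 \<H> i z * dt w))"
    using dt_hamiltonian_map_derivative[OF assms(1)] dq_hamiltonian_map_derivative[OF assms(1)]
    by (simp add: pullback_def poincare_cartan_def assms(2))
       (simp add: hamiltonian_map_def)
  also have "\<dots> = H_hat_form \<H> z w + pullback (hamiltonian_map \<H>) (lagrangian_form \<L>) z w"
    using dt_hamiltonian_map_derivative[OF assms(1)]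
    by (simp add: H_hat_form_def pullback_def lagrangian_form_def right_diff_distrib
        sum_subtractf sum_distrib_right mult.assoc)
  finally show ?thesis .
qed

theorem mainTheorem8:
  fixes \<L> \<H> :: "'n::finite pt \<Rightarrow> real"
  assumes L_diff: "\<And>y. \<L> differentiable (at y)"
    and H_diff: "\<And>z. \<H> differentiable (at z)"
    and H_diff2: "\<And>i z. (\<lambda>z'. partial3 \<H> i z') differentiable (at z)"
    and assoc: "weakly_associated \<H> \<L>"
  shows "\<forall>z\<in>constraint_space \<L>. \<forall>w.
           hamiltonian_form \<H> z w = pullback (hamiltonian_map \<H>) (poincare_cartan \<L>) z w"
proof (intro ballI allI)
  fix z w
  assume z: "z \<in> constraint_space \<L>"
  have factors: "legendre_map \<L> \<circ> hamiltonian_map \<H> \<circ> legendre_map \<L> = legendre_map \<L>"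
    and weak_eq: "hamiltonian_form \<H> z w
      = H_hat_form \<H> z w + pullback (hamiltonian_map \<H>) (lagrangian_form \<L>) z w"
    using assoc z unfolding weakly_associated_def by blast+
  from factors z have "momenta \<L> (hamiltonian_map \<H> z) = snd (snd z)"
    by (rule momenta_hamiltonian_map_on_constraint_space)
  with H_diff2 show "hamiltonian_form \<H> z w = pullback (hamiltonian_map \<H>) (poincare_cartan \<L>) z w"
    unfolding weak_eq by (rule pullback_poincare_cartan[symmetric])
qed

end
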